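(* For integers $n,k$, let $A(n,k)$ be the number of partitions $\lambda\in\mathcal{H}_n$ with $\mathrm{rep}(\lambda)=k$ (so $A(n,k)=0$ if $k<0$ or $n\le 0$). Then $A(1,0)=1$ and for all $n\ge 2$ and all integers $k$, $$A(n,k)=A(n-1,k)+A(n-1,k-1)+A(n-2,k)-A(n-2,k-1).$$
   Context: A partition is a finite nonempty weakly decreasing sequence $\lambda=(\lambda_1,\ldots,\lambda_k)$ of positive integers; $\ell(\lambda)=k$ is its number of parts. The perimeter is $\Gamma(\lambda)=\lambda_1+\ell(\lambda)-1$; $\mathcal{H}_n$ is the set of partitions with perimeter $n$ (empty for $n\le 0$). $\mathrm{rep}(\lambda)=|\{1\le i\le \ell(\lambda)-1:\lambda_i=\lambda_{i+1}\}|$. *)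

theory Defs
  imports Main
begin

definition is_partition :: "nat list \<Rightarrow> bool" where
  "is_partition xs \<longleftrightarrow> xs \<noteq> [] \<and> sorted_wrt (\<ge>) xs \<and> (\<forall>x\<in>set xs. 0 < x)"

definition perimeter :: "nat list \<Rightarrow> int" where
  "perimeter xs = int (hd xs) + int (length xs) - 1"

text \<open>rep: number of 1 <= i <= length-1 with lambda_i = lambda_(i+1); written 0-indexed.\<close>
definition rep :: "nat list \<Rightarrow> nat" where
  "rep xs = card {i. i + 1 < length xs \<and> xs ! i = xs ! (i + 1)}"

text \<open>H_n: partitions of perimeter n (empty for n <= 0, since perimeter >= 1).\<close>
definition H :: "int \<Rightarrow> nat list set" where
  "H n = {xs. is_partition xs \<and> perimeter xs = n}"

definition A :: "int \<Rightarrow> int \<Rightarrow> int" where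
  "A n k = int (card {xs \<in> H n. int (rep xs) = k})"

end

theory Submission imports Defs begin

text \<open>Split the partitions in \<open>H n\<close> according to whether \<open>\<lambda>\<^sub>1 = \<lambda>\<^sub>2\<close>. If so,
  deleting the first part is a bijection onto \<open>H (n - 1)\<close> lowering \<open>rep\<close> by one, so
  \<open>A(n,k) = A(n-1,k-1) + D(n,k)\<close>, where \<open>D(n,k)\<close> counts the partitions with \<open>rep = k\<close>
  and \<open>\<lambda>\<^sub>1 > \<lambda>\<^sub>2\<close> (or only one part). Among these, deleting the first part of those
  with \<open>\<lambda>\<^sub>1 = \<lambda>\<^sub>2 + 1\<close> lands in \<open>H (n - 2)\<close>, while for all others (when \<open>n \<ge> 2\<close>)
  lowering \<open>\<lambda>\<^sub>1\<close> by one is a bijection onto the partitions counted by \<open>D(n-1,k)\<close>.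
  Neither map changes \<open>rep\<close>, so \<open>D(n,k) = A(n-2,k) + D(n-1,k)\<close>, and eliminating \<open>D\<close> with
  the first identity at \<open>n\<close> and \<open>n - 1\<close> gives the recurrence.\<close>

lemma rep_singleton: "rep [x] = 0"
  by (simp add: rep_def)

lemma rep_Cons_Cons: "rep (x # y # ys) = (if x = y then 1 else 0) + rep (y # ys)"
proof -
  let ?R = "{i. i + 1 < length (y # ys) \<and> (y # ys) ! i = (y # ys) ! (i + 1)}"
  have "{i. i + 1 < length (x # y # ys) \<and> (x # y # ys) ! i = (x # y # ys) ! (i + 1)}
        = (if x = y then {0} else {}) \<union> Suc ` ?R" (is "?L = _")
  proof (rule set_eqI)
    fix i show "i \<in> ?L \<longleftrightarrow> i \<in> (if x = y then {0} else {}) \<union> Suc ` ?R"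
      by (cases i) auto
  qed
  moreover have "finite ?R"
    by (rule finite_subset[of _ "{..<length (y # ys)}"]) auto
  ultimately show ?thesis
    by (simp add: rep_def card_image)
qed

lemma is_partition_Cons:
  "is_partition (x # xs) \<longleftrightarrow> 0 < x \<and> (xs = [] \<or> is_partition xs \<and> hd xs \<le> x)"
proof (cases xs)
  case (Cons y ys)
  have "transp ((\<ge>) :: nat \<Rightarrow> nat \<Rightarrow> bool)"
    by (auto simp: transp_def)
  then show ?thesis
    using sorted_wrt2[of "(\<ge>)" x y ys] by (auto simp: Cons is_partition_def)
qed (simp add: is_partition_def)

lemma perimeter_Cons: "perimeter (x # xs) = int x + int (length xs)"
  by (simp add: perimeter_def)

lemma finite_H: "finite (H n)"
proof (rule finite_subset)
  show "H n \<subseteq> {xs. set xs \<subseteq> {0..nat n} \<and> length xs \<le> nat n + 1}"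
  proof
    fix xs assume "xs \<in> H n"
    then obtain x ys where "xs = x # ys" "is_partition (x # ys)" "int x + int (length ys) = n"
      by (cases xs) (auto simp: H_def is_partition_def perimeter_Cons)
    then show "xs \<in> {xs. set xs \<subseteq> {0..nat n} \<and> length xs \<le> nat n + 1}"
      by (auto simp: is_partition_def)
  qed
qed (rule finite_lists_length_le, simp)

lemma card_image_Un_disjoint:
  assumes "finite S" "finite T" "inj_on f S" "inj_on g T" "f ` S \<inter> g ` T = {}"
  shows "card (f ` S \<union> g ` T) = card S + card T"
  using assms by (simp add: card_Un_disjoint card_image)

definition H_rep :: "int \<Rightarrow> int \<Rightarrow> nat list set" where
  "H_rep n k = {xs \<in> H n. int (rep xs) = k}"

fun head_descends :: "nat list \<Rightarrow> bool" where
  "head_descends (x # y # _) \<longleftrightarrow> y < x"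
| "head_descends _ \<longleftrightarrow> True"

definition H_rep_descends :: "int \<Rightarrow> int \<Rightarrow> nat list set" where
  "H_rep_descends n k = {xs \<in> H_rep n k. head_descends xs}"

definition dup_hd :: "nat list \<Rightarrow> nat list" where
  "dup_hd xs = hd xs # xs"

definition Cons_Suc_hd :: "nat list \<Rightarrow> nat list" where
  "Cons_Suc_hd xs = Suc (hd xs) # xs"

definition Suc_hd :: "nat list \<Rightarrow> nat list" where
  "Suc_hd xs = Suc (hd xs) # tl xs"

lemma A_eq_card_H_rep: "A n k = int (card (H_rep n k))"
  by (simp add: A_def H_rep_def)

lemma finite_H_rep: "finite (H_rep n k)"
  using finite_H[of n] by (simp add: H_rep_def)

lemma finite_H_rep_descends: "finite (H_rep_descends n k)"
  using finite_H_rep[of n k] by (simp add: H_rep_descends_def)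

lemma Cons_in_H_rep:
  "x # xs \<in> H_rep n k \<longleftrightarrow> is_partition (x # xs) \<and> int x + int (length xs) = n \<and> int (rep (x # xs)) = k"
  by (simp add: H_rep_def H_def perimeter_Cons)

lemma H_rep_obtain_Cons:
  assumes "xs \<in> H_rep n k"
  obtains y ys where "xs = y # ys"
  using assms by (cases xs) (auto simp: H_rep_def H_def is_partition_def)

lemma H_rep_decomp: "H_rep n k = dup_hd ` H_rep (n - 1) (k - 1) \<union> H_rep_descends n k"
proof (intro set_eqI iffI)
  fix xs assume xs: "xs \<in> H_rep n k"
  then obtain x ys where xs_eq: "xs = x # ys"
    by (rule H_rep_obtain_Cons)
  show "xs \<in> dup_hd ` H_rep (n - 1) (k - 1) \<union> H_rep_descends n k"
  proof (cases "head_descends xs")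
    case False
    then obtain zs where "ys = x # zs"
      using xs xs_eq by (cases ys) (auto simp: Cons_in_H_rep is_partition_Cons)
    then have "ys \<in> H_rep (n - 1) (k - 1)" "xs = dup_hd ys"
      using xs xs_eq by (auto simp: Cons_in_H_rep is_partition_Cons rep_Cons_Cons dup_hd_def)
    then show ?thesis by blast
  qed (simp add: xs H_rep_descends_def)
next
  fix xs assume "xs \<in> dup_hd ` H_rep (n - 1) (k - 1) \<union> H_rep_descends n k"
  then show "xs \<in> H_rep n k"
  proof
    assume "xs \<in> dup_hd ` H_rep (n - 1) (k - 1)"
    then obtain y ys where "y # ys \<in> H_rep (n - 1) (k - 1)" "xs = dup_hd (y # ys)"
      by (metis H_rep_obtain_Cons imageE)
    then show ?thesis
      by (auto simp: dup_hd_def Cons_in_H_rep is_partition_Cons rep_Cons_Cons)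
  qed (simp add: H_rep_descends_def)
qed

lemma A_eq_A_pred_plus_descends: "A n k = A (n - 1) (k - 1) + int (card (H_rep_descends n k))"
proof -
  have "dup_hd ` H_rep (n - 1) (k - 1) \<inter> id ` H_rep_descends n k = {}"
    by (auto simp: dup_hd_def H_rep_descends_def elim!: H_rep_obtain_Cons)
  then have "card (H_rep n k) = card (H_rep (n - 1) (k - 1)) + card (H_rep_descends n k)"
    using card_image_Un_disjoint[of _ _ dup_hd id] finite_H_rep finite_H_rep_descends
    by (simp add: H_rep_decomp[of n k] inj_on_def dup_hd_def)
  then show ?thesis
    by (simp add: A_eq_card_H_rep)
qed

lemma H_rep_descends_decomp:
  assumes "n \<ge> 2"
  shows "H_rep_descends n k = Cons_Suc_hd ` H_rep (n - 2) k \<union> Suc_hd ` H_rep_descends (n - 1) k"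
proof (intro set_eqI iffI)
  fix xs assume "xs \<in> H_rep_descends n k"
  then have xs_in: "xs \<in> H_rep n k" and descends: "head_descends xs"
    by (simp_all add: H_rep_descends_def)
  from xs_in obtain x ys where xs_eq: "xs = x # ys"
    by (rule H_rep_obtain_Cons)
  show "xs \<in> Cons_Suc_hd ` H_rep (n - 2) k \<union> Suc_hd ` H_rep_descends (n - 1) k"
  proof (cases "ys \<noteq> [] \<and> x = Suc (hd ys)")
    case True
    then have "ys \<in> H_rep (n - 2) k" "xs = Cons_Suc_hd ys"
      using xs_in xs_eq
      by (auto simp: neq_Nil_conv Cons_in_H_rep is_partition_Cons rep_Cons_Cons Cons_Suc_hd_def)
    then show ?thesis by blast
  next
    case False
    have "x \<ge> 2"
      using False xs_in assms descends xs_eq by (cases ys) (auto simp: Cons_in_H_rep)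
    have "(x - 1) # ys \<in> H_rep_descends (n - 1) k"
      using False xs_in descends xs_eq \<open>x \<ge> 2\<close>
      by (cases ys) (auto simp: H_rep_descends_def Cons_in_H_rep is_partition_Cons rep_singleton
          rep_Cons_Cons of_nat_diff)
    moreover have "xs = Suc_hd ((x - 1) # ys)"
      using xs_eq \<open>x \<ge> 2\<close> by (simp add: Suc_hd_def)
    ultimately show ?thesis by blast
  qed
next
  fix xs assume "xs \<in> Cons_Suc_hd ` H_rep (n - 2) k \<union> Suc_hd ` H_rep_descends (n - 1) k"
  then show "xs \<in> H_rep_descends n k"
  proof
    assume "xs \<in> Cons_Suc_hd ` H_rep (n - 2) k"
    then obtain y ys where "y # ys \<in> H_rep (n - 2) k" "xs = Cons_Suc_hd (y # ys)"
      by (metis H_rep_obtain_Cons imageE)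
    then show ?thesis
      by (auto simp: Cons_Suc_hd_def H_rep_descends_def Cons_in_H_rep is_partition_Cons rep_Cons_Cons)
  next
    assume "xs \<in> Suc_hd ` H_rep_descends (n - 1) k"
    then obtain ys where ys: "ys \<in> H_rep_descends (n - 1) k" "xs = Suc_hd ys"
      by blast
    then obtain y ys' where "ys = y # ys'"
      by (auto simp: H_rep_descends_def elim: H_rep_obtain_Cons)
    with ys show ?thesis
      by (cases ys') (auto simp: Suc_hd_def H_rep_descends_def Cons_in_H_rep is_partition_Cons
          rep_singleton rep_Cons_Cons)
  qed
qed

lemma card_H_rep_descends_rec:
  assumes "n \<ge> 2"
  shows "int (card (H_rep_descends n k)) = A (n - 2) k + int (card (H_rep_descends (n - 1) k))"
proof -
  have "Cons_Suc_hd ` H_rep (n - 2) k \<inter> Suc_hd ` H_rep_descends (n - 1) k = {}"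
    by (auto simp: Cons_Suc_hd_def Suc_hd_def H_rep_descends_def elim!: H_rep_obtain_Cons)
  moreover have "inj_on Suc_hd (H_rep_descends (n - 1) k)"
    by (auto simp: inj_on_def Suc_hd_def H_rep_descends_def elim!: H_rep_obtain_Cons)
  ultimately show ?thesis
    using card_image_Un_disjoint[of _ _ Cons_Suc_hd Suc_hd] finite_H_rep finite_H_rep_descends
    by (simp add: H_rep_descends_decomp[OF assms] inj_on_def Cons_Suc_hd_def A_eq_card_H_rep)
qed

lemma H_rep_1_0: "H_rep 1 0 = {[1]}"
proof (intro set_eqI iffI)
  fix xs assume xs: "xs \<in> H_rep 1 0"
  then obtain x ys where "xs = x # ys"
    by (rule H_rep_obtain_Cons)
  with xs show "xs \<in> {[1]}"
    by (cases ys) (auto simp: Cons_in_H_rep is_partition_Cons)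
qed (simp add: Cons_in_H_rep is_partition_Cons rep_singleton)

theorem lemma2p1:
  shows "A 1 0 = 1 \<and>
    (\<forall>n k::int. n \<ge> 2 \<longrightarrow>
       A n k = A (n - 1) k + A (n - 1) (k - 1) + A (n - 2) k - A (n - 2) (k - 1))"
proof (intro conjI allI impI)
  show "A 1 0 = 1"
    by (simp add: A_eq_card_H_rep H_rep_1_0)
  fix n k :: int assume "n \<ge> 2"
  have "A n k = A (n - 1) (k - 1) + int (card (H_rep_descends n k))"
    by (rule A_eq_A_pred_plus_descends)
  moreover have "A (n - 1) k = A (n - 2) (k - 1) + int (card (H_rep_descends (n - 1) k))"
    using A_eq_A_pred_plus_descends[of "n - 1" k] by simp
  moreover have "int (card (H_rep_descends n k)) = A (n - 2) k + int (card (H_rep_descends (n - 1) k))"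
    using \<open>n \<ge> 2\<close> by (rule card_H_rep_descends_rec)
  ultimately show "A n k = A (n - 1) k + A (n - 1) (k - 1) + A (n - 2) k - A (n - 2) (k - 1)"
    by simp
qed

end
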